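(* Let $p$ be a prime, $k\ge1$, $\Gamma=\mathbb{Z}_p\,\mathrm{wr}\,\mathbb{Z}^k=\Sigma\rtimes_\alpha\mathbb{Z}^k$, and let $\phi:\Gamma\to\Gamma$ be an automorphism with restriction $\phi'=\phi|_\Sigma$ and induced automorphism $\overline{\phi}:\mathbb{Z}^k\to\mathbb{Z}^k$ on $\Gamma/\Sigma\cong\mathbb{Z}^k$, such that $\phi'(\delta_0)=m\,\delta_0$ for some $0\ne m\in\mathbb{Z}_p$ (so $\phi'(\delta_x)=m\,\delta_{\overline{\phi}(x)}$ for all $x$). Let $x\in\mathbb{Z}^k$ have infinite $\overline{\phi}$-orbit, and let $B=\bigoplus_{n\in\mathbb{Z}}A_{\overline{\phi}^n(x)}\subset\Sigma$, which is invariant under $1-\phi'$. Then the restriction of $1-\phi'$ to $B$ is not an epimorphism onto $B$.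
   Context: $\mathbb{Z}_p\,\mathrm{wr}\,\mathbb{Z}^k$ is $\Sigma\rtimes_\alpha\mathbb{Z}^k$ with $\Sigma=\bigoplus_{x\in\mathbb{Z}^k}A_x$ (finitely supported), $A_x\cong\mathbb{Z}_p$ generated by $\delta_x$, and $\alpha(y)(\delta_x)=\delta_{y+x}$. $\Sigma$ is characteristic (torsion subgroup). Here $1-\phi'$ denotes the endomorphism $h\mapsto h-\phi'(h)$ of the abelian group $\Sigma$. *)

theory Defs
  imports "HOL-Algebra.Group" "HOL-Computational_Algebra.Primes"
begin

text \<open>Z^k is modelled as 'k \<Rightarrow> int for a finite type 'k (so k = CARD('k) \<ge> 1).
  Z_p is modelled as the integers {0..<p} with arithmetic mod p.
  Sigma = finitely supported functions Z^k \<Rightarrow> Z_p.\<close>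

type_synonym 'k zk = "'k \<Rightarrow> int"
type_synonym 'k sig = "'k zk \<Rightarrow> int"

definition zadd :: "'k zk \<Rightarrow> 'k zk \<Rightarrow> 'k zk" where
  "zadd y1 y2 = (\<lambda>i. y1 i + y2 i)"

definition zzero :: "'k zk" where
  "zzero = (\<lambda>i. 0)"

definition Sig :: "int \<Rightarrow> 'k sig set" where
  "Sig p = {f. (\<forall>z. f z \<in> {0..<p}) \<and> finite {z. f z \<noteq> 0}}"

definition sadd :: "int \<Rightarrow> 'k sig \<Rightarrow> 'k sig \<Rightarrow> 'k sig" where
  "sadd p f g = (\<lambda>z. (f z + g z) mod p)"

definition ssub :: "int \<Rightarrow> 'k sig \<Rightarrow> 'k sig \<Rightarrow> 'k sig" where
  "ssub p f g = (\<lambda>z. (f z - g z) mod p)"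

definition sdelta :: "int \<Rightarrow> 'k zk \<Rightarrow> 'k sig" where
  "sdelta m x = (\<lambda>z. if z = x then m else 0)"

text \<open>alpha(y)(f) = f(\<cdot> - y), so that alpha(y)(delta_x) = delta_(y+x).\<close>
definition shift :: "'k zk \<Rightarrow> 'k sig \<Rightarrow> 'k sig" where
  "shift y f = (\<lambda>z. f (\<lambda>i. z i - y i))"

definition WR :: "int \<Rightarrow> ('k sig \<times> 'k zk) monoid" where
  "WR p = \<lparr> carrier = Sig p \<times> UNIV,
            monoid.mult = (\<lambda>(f1, y1) (f2, y2). (sadd p f1 (shift y1 f2), zadd y1 y2)),
            monoid.one = (\<lambda>z. 0, zzero) \<rparr>"

definition phi_res :: "('k sig \<times> 'k zk \<Rightarrow> 'k sig \<times> 'k zk) \<Rightarrow> 'k sig \<Rightarrow> 'k sig" where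
  "phi_res \<phi> h = fst (\<phi> (h, zzero))"

text \<open>Induced map on Gamma/Sigma \<cong> Z^k (the quotient map is snd).\<close>
definition phi_bar :: "('k sig \<times> 'k zk \<Rightarrow> 'k sig \<times> 'k zk) \<Rightarrow> 'k zk \<Rightarrow> 'k zk" where
  "phi_bar \<phi> y = snd (\<phi> (\<lambda>z. 0, y))"

text \<open>Z-orbit {f^n(x) | n \<in> Z} of a bijection f.\<close>
definition zorbit :: "('a \<Rightarrow> 'a) \<Rightarrow> 'a \<Rightarrow> 'a set" where
  "zorbit f x = {y. \<exists>n::nat. (f ^^ n) x = y \<or> (f ^^ n) y = x}"

definition Bsub :: "int \<Rightarrow> 'k zk set \<Rightarrow> 'k sig set" where
  "Bsub p Orb = {h \<in> Sig p. {z. h z \<noteq> 0} \<subseteq> Orb}"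

end

theory Submission
  imports Defs
begin

text \<open>An automorphism \<phi> of \<Gamma> maps the torsion subgroup \<Sigma> to itself, and since \<delta>_z is the conjugate
  of \<delta>_0 by the translation z, it acts on \<Sigma> by \<phi>'(\<Sum> h_z \<delta>_z) = \<Sum> m h_z \<delta>_(\<phi>bar z).
  Along an infinite orbit of \<phi>bar the group B is the Laurent polynomial ring Z_p[t, 1/t] and
  1 - \<phi>' is multiplication by 1 - m t, which is not a unit; so \<delta>_x has no preimage.\<close>

lemma WR_carrier: "carrier (WR p) = Sig p \<times> UNIV"
  by (simp add: WR_def)

lemma WR_one: "\<one>\<^bsub>WR p\<^esub> = (\<lambda>z. 0, zzero)"
  by (simp add: WR_def)

lemma WR_mult: "a \<otimes>\<^bsub>WR p\<^esub> b = (sadd p (fst a) (shift (snd a) (fst b)), zadd (snd a) (snd b))"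
  by (cases a, cases b) (simp add: WR_def)

lemma shift_zzero [simp]: "shift zzero f = f"
  by (simp add: shift_def zzero_def)

lemma zadd_zzero [simp]: "zadd zzero y = y" "zadd y zzero = y"
  by (simp_all add: zadd_def zzero_def)

lemma Sig_sdelta: "c \<in> {0..<p} \<Longrightarrow> sdelta c x \<in> Sig p"
  unfolding Sig_def sdelta_def by (auto intro: finite_subset[of _ "{x}"])

lemma Sig_sadd: "0 < p \<Longrightarrow> f \<in> Sig p \<Longrightarrow> g \<in> Sig p \<Longrightarrow> sadd p f g \<in> Sig p"
  unfolding Sig_def sadd_def
  by (auto intro: finite_subset[of _ "{z. f z \<noteq> 0} \<union> {z. g z \<noteq> 0}"])

lemma Sig_shift: "g \<in> Sig p \<Longrightarrow> shift y g \<in> Sig p"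
proof -
  assume g: "g \<in> Sig p"
  have "{z. shift y g z \<noteq> 0} = (\<lambda>w i. w i + y i) ` {w. g w \<noteq> 0}"
    by (auto simp: shift_def image_iff intro!: exI[of _ "\<lambda>i. _ i - y i"])
  with g show ?thesis by (simp add: Sig_def shift_def)
qed

lemma Sig_neg: "0 < p \<Longrightarrow> g \<in> Sig p \<Longrightarrow> (\<lambda>z. (- g z) mod p) \<in> Sig p"
  unfolding Sig_def by (auto elim!: rev_finite_subset)

lemma Sig_pair_in_carrier: "h \<in> Sig p \<Longrightarrow> (h, y) \<in> carrier (WR p)"
  by (simp add: WR_carrier)

lemma translation_in_carrier: "0 < p \<Longrightarrow> (\<lambda>z. 0, y) \<in> carrier (WR p)"
  by (simp add: WR_carrier Sig_def)

lemma group_WR: "0 < p \<Longrightarrow> group (WR p :: (('k sig \<times> 'k zk) monoid))"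
proof (rule groupI)
  fix a b c :: "'k sig \<times> 'k zk"
  show "a \<otimes>\<^bsub>WR p\<^esub> b \<otimes>\<^bsub>WR p\<^esub> c = a \<otimes>\<^bsub>WR p\<^esub> (b \<otimes>\<^bsub>WR p\<^esub> c)"
    by (simp add: WR_mult sadd_def shift_def zadd_def mod_add_left_eq mod_add_right_eq
        add.assoc diff_diff_eq)
next
  fix a :: "'k sig \<times> 'k zk" assume "0 < p" "a \<in> carrier (WR p)"
  then have "(shift (- snd a) (\<lambda>z. (- fst a z) mod p), - snd a) \<in> carrier (WR p)"
    by (simp add: WR_carrier Sig_shift Sig_neg mem_Times_iff)
  moreover have "(shift (- snd a) (\<lambda>z. (- fst a z) mod p), - snd a) \<otimes>\<^bsub>WR p\<^esub> a = \<one>\<^bsub>WR p\<^esub>"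
    by (simp add: WR_mult WR_one sadd_def shift_def zadd_def zzero_def mod_add_left_eq fun_eq_iff)
  ultimately show "\<exists>b \<in> carrier (WR p). b \<otimes>\<^bsub>WR p\<^esub> a = \<one>\<^bsub>WR p\<^esub>" ..
next
  fix a b :: "'k sig \<times> 'k zk" assume "0 < p" "a \<in> carrier (WR p)" "b \<in> carrier (WR p)"
  then show "a \<otimes>\<^bsub>WR p\<^esub> b \<in> carrier (WR p)"
    by (auto simp: WR_carrier WR_mult mem_Times_iff intro!: Sig_sadd Sig_shift)
qed (auto simp: WR_carrier WR_mult WR_one Sig_def sadd_def shift_def zadd_def zzero_def)

lemma WR_pow_snd: "snd (a [^]\<^bsub>WR p\<^esub> (n::nat)) = (\<lambda>i. int n * snd a i)"
  by (induction n) (simp_all add: WR_one WR_mult zzero_def zadd_def algebra_simps)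

lemma WR_pow_Sig: "(g, zzero) [^]\<^bsub>WR p\<^esub> (n::nat) = (\<lambda>z. (int n * g z) mod p, zzero)"
  by (induction n) (simp_all add: WR_one WR_mult sadd_def shift_def zadd_def zzero_def
      mod_add_right_eq algebra_simps)

lemma WR_pow_eq_one_imp_snd_zero:
  assumes "a [^]\<^bsub>WR p\<^esub> (n::nat) = \<one>\<^bsub>WR p\<^esub>" "0 < n"
  shows "snd a = zzero"
proof
  fix i
  have "int n * snd a i = 0"
    using arg_cong[OF assms(1), of "\<lambda>a. snd a i"] by (simp add: WR_pow_snd WR_one zzero_def)
  with assms(2) show "snd a i = zzero i" by (simp add: zzero_def)
qed

lemma WR_Sig_pow_p: "0 < p \<Longrightarrow> (g, zzero) [^]\<^bsub>WR p\<^esub> nat p = \<one>\<^bsub>WR p\<^esub>"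
  by (simp add: WR_pow_Sig WR_one)

lemma sadd_commute: "sadd p f g = sadd p g f"
  by (simp add: sadd_def add.commute)

lemma sadd_right_cancel:
  assumes "0 < p" "g \<in> Sig p" "a \<in> Sig p" "b \<in> Sig p" "sadd p a g = sadd p b g"
  shows "a = b"
proof -
  have "(a, zzero) \<otimes>\<^bsub>WR p\<^esub> (g, zzero) = (b, zzero) \<otimes>\<^bsub>WR p\<^esub> (g, zzero)"
    using assms(5) by (simp add: WR_mult)
  then show ?thesis
    using group.right_cancel[OF group_WR[OF assms(1)], of "(g, zzero)" "(a, zzero)" "(b, zzero)"]
      assms by (simp add: WR_carrier)
qed

definition scaled_pushforward :: "int \<Rightarrow> int \<Rightarrow> ('a \<Rightarrow> 'a) \<Rightarrow> ('a \<Rightarrow> int) \<Rightarrow> 'a \<Rightarrow> int" where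
  "scaled_pushforward p m f h w = (if w \<in> range f then (m * h (inv_into UNIV f w)) mod p else 0)"

lemma scaled_pushforward_apply: "inj f \<Longrightarrow> scaled_pushforward p m f h (f z) = (m * h z) mod p"
  by (simp add: scaled_pushforward_def)

lemma scaled_pushforward_sadd:
  "scaled_pushforward p m f (sadd p u v) = sadd p (scaled_pushforward p m f u) (scaled_pushforward p m f v)"
  by (simp add: scaled_pushforward_def sadd_def fun_eq_iff distrib_left mod_add_eq mod_mult_right_eq)

lemma scaled_pushforward_sdelta:
  assumes "inj f"
  shows "scaled_pushforward p m f (sdelta c z) = sdelta ((c * m) mod p) (f z)"
proof
  fix w
  show "scaled_pushforward p m f (sdelta c z) w = sdelta ((c * m) mod p) (f z) w"
    using assms by (cases "w \<in> range f") (auto simp: scaled_pushforward_def sdelta_def inj_eq mult.commute)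
qed

lemma self_in_zorbit: "x \<in> zorbit f x"
  unfolding zorbit_def by (auto intro: exI[of _ 0])

lemma zorbit_sym: "y \<in> zorbit f x \<longleftrightarrow> x \<in> zorbit f y"
  unfolding zorbit_def by blast

lemma funpow_mem_iff_of_image_eq:
  assumes "inj f" "f ` S = S"
  shows "(f ^^ n) y \<in> S \<longleftrightarrow> y \<in> S"
proof (induction n arbitrary: y)
  case (Suc n)
  have "f y \<in> S \<longleftrightarrow> y \<in> S"
    using assms by (metis inj_image_mem_iff)
  with Suc show ?case
    by (simp add: funpow_Suc_right del: funpow.simps)
qed simp

lemma zorbit_subset_of_image_eq:
  assumes "inj f" "f ` S = S" "x \<in> S"
  shows "zorbit f x \<subseteq> S"
  using funpow_mem_iff_of_image_eq[OF assms(1,2)] assms(3) by (auto simp: zorbit_def)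

text \<open>Read along the orbit, the top and the bottom coefficient of a preimage h of \<delta>_x under
  1 - m t would both have to sit at x.\<close>
lemma ssub_scaled_pushforward_ne_sdelta:
  fixes h :: "'k sig"
  assumes "prime p" "m \<in> {1..<p}" "inj f" "infinite (zorbit f x)" "h \<in> Bsub p (zorbit f x)"
  shows "ssub p h (scaled_pushforward p m f h) \<noteq> sdelta 1 x"
proof
  assume eq: "ssub p h (scaled_pushforward p m f h) = sdelta 1 x"
  define S where "S = {z. h z \<noteq> 0}"
  have S_finite: "finite S" and S_orbit: "S \<subseteq> zorbit f x" and h_range: "\<And>z. h z \<in> {0..<p}"
    using assms(5) by (auto simp: S_def Bsub_def Sig_def)
  have at_image: "(h (f z) - (m * h z) mod p) mod p = (if f z = x then 1 else 0)" for z
    using fun_cong[OF eq, of "f z"] assms(3) by (simp add: ssub_def sdelta_def scaled_pushforward_apply)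
  have off_image: "h w = (if w = x then 1 else 0)" if "w \<notin> range f" for w
    using fun_cong[OF eq, of w] that h_range[of w] by (simp add: ssub_def sdelta_def scaled_pushforward_def)
  have "S \<noteq> {}"
  proof
    assume "S = {}"
    then have "h = (\<lambda>z. 0)" by (auto simp: S_def)
    then show False
      using fun_cong[OF eq, of x] by (simp add: ssub_def sdelta_def scaled_pushforward_def)
  qed
  then obtain y where "y \<in> S" by blast
  have "f ` S \<noteq> S"
  proof
    assume "f ` S = S"
    then have "zorbit f y \<subseteq> S"
      using \<open>y \<in> S\<close> assms(3) by (intro zorbit_subset_of_image_eq)
    moreover have "x \<in> zorbit f y"
      using \<open>y \<in> S\<close> S_orbit by (auto intro: zorbit_sym[THEN iffD1])
    ultimately have "zorbit f x \<subseteq> S"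
      using assms(3) \<open>f ` S = S\<close> by (intro zorbit_subset_of_image_eq) auto
    with S_finite assms(4) show False
      using finite_subset by blast
  qed
  moreover have card_eq: "card (f ` S) = card S"
    using assms(3) by (simp add: card_image inj_on_subset)
  ultimately have "\<not> f ` S \<subseteq> S" and "\<not> S \<subseteq> f ` S"
    using card_subset_eq[OF S_finite _ card_eq] card_subset_eq[OF finite_imageI[OF S_finite] _ card_eq[symmetric]]
    by auto
  then obtain z1 z0 where z1: "z1 \<in> S" "f z1 \<notin> S" and z0: "z0 \<in> S" "z0 \<notin> f ` S"
    by blast
  have "f z1 = x"
  proof (rule ccontr)
    assume "f z1 \<noteq> x"
    then have "(m * h z1) mod p = 0"
      using at_image[of z1] z1(2) by (simp add: S_def mod_eq_0_iff_dvd dvd_mod_iff)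
    moreover have "\<not> p dvd m * h z1"
      using assms(1,2) h_range[of z1] z1(1) by (auto simp: S_def prime_dvd_mult_iff zdvd_not_zless)
    ultimately show False
      by (simp add: mod_eq_0_iff_dvd)
  qed
  moreover have "z0 = x"
  proof (cases "z0 \<in> range f")
    case True
    then obtain u where "z0 = f u" "u \<notin> S"
      using z0(2) by blast
    then show ?thesis
      using at_image[of u] h_range[of z0] z0(1) by (auto simp: S_def split: if_splits)
  next
    case False
    then show ?thesis
      using off_image[of z0] z0(1) by (auto simp: S_def split: if_splits)
  qed
  ultimately show False
    using z0(2) z1(1) by blast
qed

context
  fixes p :: int and \<phi> :: "('k::finite) sig \<times> 'k zk \<Rightarrow> 'k sig \<times> 'k zk"
  assumes p_gt_1: "1 < p" and iso: "\<phi> \<in> iso (WR p) (WR p)"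
begin

lemma p_pos: "0 < p"
  using p_gt_1 by simp

lemma group_hom_phi: "group_hom (WR p) (WR p) \<phi>"
  using group_WR[of p] p_gt_1 iso by (simp add: group_hom_def group_hom_axioms_def iso_def)

text \<open>\<Sigma> is the torsion subgroup: its elements have order p, and nothing outside \<Sigma> has finite
  order.\<close>
lemma phi_Sig: "h \<in> Sig p \<Longrightarrow> \<phi> (h, zzero) = (phi_res \<phi> h, zzero)"
proof -
  assume "h \<in> Sig p"
  then have "\<phi> (h, zzero) [^]\<^bsub>WR p\<^esub> nat p = \<phi> ((h, zzero) [^]\<^bsub>WR p\<^esub> nat p)"
    by (simp add: group_hom.hom_nat_pow[OF group_hom_phi] Sig_pair_in_carrier)
  also have "\<dots> = \<one>\<^bsub>WR p\<^esub>"
    using p_gt_1 WR_Sig_pow_p[of p h] group_hom.hom_one[OF group_hom_phi] by simp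
  finally have "\<phi> (h, zzero) [^]\<^bsub>WR p\<^esub> nat p = \<one>\<^bsub>WR p\<^esub>" .
  then have "snd (\<phi> (h, zzero)) = zzero"
    by (rule WR_pow_eq_one_imp_snd_zero) (use p_gt_1 in simp)
  then show ?thesis by (simp add: phi_res_def prod_eq_iff)
qed

lemma phi_res_Sig: "h \<in> Sig p \<Longrightarrow> phi_res \<phi> h \<in> Sig p"
  using hom_in_carrier[OF iso_imp_homomorphism[OF iso] Sig_pair_in_carrier[of h p zzero]] phi_Sig[of h]
  by (simp add: WR_carrier)

lemma phi_res_sadd:
  assumes "h1 \<in> Sig p" "h2 \<in> Sig p"
  shows "phi_res \<phi> (sadd p h1 h2) = sadd p (phi_res \<phi> h1) (phi_res \<phi> h2)"
proof -
  have "(sadd p h1 h2, zzero) = (h1, zzero) \<otimes>\<^bsub>WR p\<^esub> (h2, zzero)"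
    by (simp add: WR_mult)
  then have "phi_res \<phi> (sadd p h1 h2) = fst (\<phi> (h1, zzero) \<otimes>\<^bsub>WR p\<^esub> \<phi> (h2, zzero))"
    using assms by (simp add: phi_res_def group_hom.hom_mult[OF group_hom_phi] Sig_pair_in_carrier)
  then show ?thesis
    using assms by (simp add: phi_Sig WR_mult)
qed

lemma phi_bar_zadd: "phi_bar \<phi> (zadd a b) = zadd (phi_bar \<phi> a) (phi_bar \<phi> b)"
proof -
  have "(\<lambda>z. 0, zadd a b) = (\<lambda>z. 0, a) \<otimes>\<^bsub>WR p\<^esub> (\<lambda>z. 0, b)"
    by (simp add: WR_mult sadd_def shift_def)
  then have "\<phi> (\<lambda>z. 0, zadd a b) = \<phi> (\<lambda>z. 0, a) \<otimes>\<^bsub>WR p\<^esub> \<phi> (\<lambda>z. 0, b)"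
    by (simp only: group_hom.hom_mult[OF group_hom_phi] translation_in_carrier[OF p_pos])
  then show ?thesis
    by (simp add: phi_bar_def WR_mult)
qed

lemma phi_bar_eq_zero_imp: "phi_bar \<phi> d = zzero \<Longrightarrow> d = zzero"
proof -
  assume "phi_bar \<phi> d = zzero"
  then obtain g where g: "\<phi> (\<lambda>z. 0, d) = (g, zzero)"
    by (metis phi_bar_def prod.collapse)
  have "g \<in> Sig p"
    using hom_in_carrier[OF iso_imp_homomorphism[OF iso] translation_in_carrier[OF p_pos], of d] g
    by (simp add: WR_carrier)
  have "\<phi> ((\<lambda>z. 0, d) [^]\<^bsub>WR p\<^esub> nat p) = \<phi> \<one>\<^bsub>WR p\<^esub>"
    using p_gt_1 WR_Sig_pow_p[of p g] g
    by (simp add: group_hom.hom_nat_pow[OF group_hom_phi] translation_in_carrier[OF p_pos]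
        group_hom.hom_one[OF group_hom_phi] del: pow_nat)
  moreover have "monoid (WR p :: ('k sig \<times> 'k zk) monoid)"
    using p_gt_1 by (intro group.is_monoid group_WR) simp
  then have "(\<lambda>z. 0, d) [^]\<^bsub>WR p\<^esub> nat p \<in> carrier (WR p)"
    by (simp add: monoid.nat_pow_closed translation_in_carrier[OF p_pos] del: pow_nat)
  moreover have "inj_on \<phi> (carrier (WR p))"
    using iso by (simp add: iso_def bij_betw_def)
  ultimately have "(\<lambda>z. 0, d) [^]\<^bsub>WR p\<^esub> nat p = \<one>\<^bsub>WR p\<^esub>"
    by (simp add: inj_on_eq_iff WR_one translation_in_carrier[OF p_pos] del: pow_nat)
  from WR_pow_eq_one_imp_snd_zero[OF this] p_gt_1 show "d = zzero" by simp
qed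

lemma inj_phi_bar: "inj (phi_bar \<phi>)"
proof (rule injI)
  fix a b assume "phi_bar \<phi> a = phi_bar \<phi> b"
  then have "phi_bar \<phi> (\<lambda>i. b i - a i) = zzero"
    using phi_bar_zadd[of a "\<lambda>i. b i - a i"]
    by (simp add: zadd_def zzero_def fun_eq_iff)
  then have "(\<lambda>i. b i - a i) = zzero"
    by (rule phi_bar_eq_zero_imp)
  then show "a = b"
    by (simp add: zzero_def fun_eq_iff)
qed

context
  fixes m :: int
  assumes m_range: "m \<in> {1..<p}"
    and phi_res_sdelta_zero: "phi_res \<phi> (sdelta 1 zzero) = sdelta m zzero"
begin

lemma phi_res_sdelta_one: "phi_res \<phi> (sdelta 1 z) = sdelta m (phi_bar \<phi> z)"
proof -
  obtain g where g: "\<phi> (\<lambda>w. 0, z) = (g, phi_bar \<phi> z)"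
    by (metis phi_bar_def prod.collapse)
  have g_Sig: "g \<in> Sig p"
    using hom_in_carrier[OF iso_imp_homomorphism[OF iso] translation_in_carrier[OF p_pos], of z] g
    by (simp add: WR_carrier)
  have delta_Sig: "sdelta 1 z \<in> Sig p" "sdelta 1 zzero \<in> Sig p" "sdelta m (phi_bar \<phi> z) \<in> Sig p"
    using p_gt_1 m_range by (simp_all add: Sig_sdelta)
  have "(\<lambda>w. 0, z) \<otimes>\<^bsub>WR p\<^esub> (sdelta 1 zzero, zzero) = (sdelta 1 z, zzero) \<otimes>\<^bsub>WR p\<^esub> (\<lambda>w. 0, z)"
    using p_gt_1 by (simp add: WR_mult sadd_def shift_def sdelta_def zzero_def zadd_def fun_eq_iff)
  then have "\<phi> ((\<lambda>w. 0, z) \<otimes>\<^bsub>WR p\<^esub> (sdelta 1 zzero, zzero))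
      = \<phi> ((sdelta 1 z, zzero) \<otimes>\<^bsub>WR p\<^esub> (\<lambda>w. 0, z))"
    by (rule arg_cong)
  then have "\<phi> (\<lambda>w. 0, z) \<otimes>\<^bsub>WR p\<^esub> \<phi> (sdelta 1 zzero, zzero)
      = \<phi> (sdelta 1 z, zzero) \<otimes>\<^bsub>WR p\<^esub> \<phi> (\<lambda>w. 0, z)"
    unfolding group_hom.hom_mult[OF group_hom_phi translation_in_carrier[OF p_pos]
        Sig_pair_in_carrier[OF delta_Sig(2)]]
      group_hom.hom_mult[OF group_hom_phi Sig_pair_in_carrier[OF delta_Sig(1)]
        translation_in_carrier[OF p_pos]] .
  then have "sadd p g (shift (phi_bar \<phi> z) (sdelta m zzero)) = sadd p (phi_res \<phi> (sdelta 1 z)) g"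
    by (simp add: g phi_Sig[OF delta_Sig(1)] phi_Sig[OF delta_Sig(2)] phi_res_sdelta_zero WR_mult)
  moreover have "shift (phi_bar \<phi> z) (sdelta m zzero) = sdelta m (phi_bar \<phi> z)"
    by (simp add: shift_def sdelta_def zzero_def fun_eq_iff)
  ultimately have "sadd p (sdelta m (phi_bar \<phi> z)) g = sadd p (phi_res \<phi> (sdelta 1 z)) g"
    by (simp add: sadd_commute)
  then show ?thesis
    using p_gt_1 sadd_right_cancel[OF _ g_Sig delta_Sig(3) phi_res_Sig[OF delta_Sig(1)]] by simp
qed

lemma phi_res_sdelta:
  assumes "c \<in> {0..<p}"
  shows "phi_res \<phi> (sdelta c z) = sdelta ((c * m) mod p) (phi_bar \<phi> z)"
proof -
  have delta_Sig: "sdelta 1 z \<in> Sig p"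
    using p_gt_1 by (simp add: Sig_sdelta)
  have pow: "(sdelta 1 z, zzero) [^]\<^bsub>WR p\<^esub> nat c = (sdelta c z, zzero)"
    using assms by (simp add: WR_pow_Sig sdelta_def fun_eq_iff del: pow_nat)
  have "\<phi> (sdelta c z, zzero) = (sdelta m (phi_bar \<phi> z), zzero) [^]\<^bsub>WR p\<^esub> nat c"
    unfolding pow[symmetric] using delta_Sig
    by (simp add: group_hom.hom_nat_pow[OF group_hom_phi] Sig_pair_in_carrier phi_Sig
        phi_res_sdelta_one del: pow_nat)
  also have "\<dots> = (sdelta ((c * m) mod p) (phi_bar \<phi> z), zzero)"
    using assms by (simp add: WR_pow_Sig sdelta_def fun_eq_iff del: pow_nat)
  finally show ?thesis
    by (simp add: phi_res_def)
qed

lemma phi_res_eq_scaled_pushforward: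
  assumes "h \<in> Sig p"
  shows "phi_res \<phi> h = scaled_pushforward p m (phi_bar \<phi>) h"
proof -
  have on_support: "phi_res \<phi> h = scaled_pushforward p m (phi_bar \<phi>) h"
    if "finite F" "h \<in> Sig p" "{z. h z \<noteq> 0} \<subseteq> F" for F h
    using that
  proof (induction F arbitrary: h rule: finite_induct)
    case empty
    then have "h = (\<lambda>z. 0)" by auto
    then show ?case
      using group_hom.hom_one[OF group_hom_phi]
      by (simp add: phi_res_def WR_one scaled_pushforward_def fun_eq_iff)
  next
    case (insert a F)
    define h' where "h' = h(a := 0)"
    have h'_Sig: "h' \<in> Sig p"
      using insert.prems(1) p_gt_1 unfolding h'_def Sig_def by (auto elim!: rev_finite_subset)
    have h_a: "h a \<in> {0..<p}"
      using insert.prems(1) by (simp add: Sig_def)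
    then have delta_Sig: "sdelta (h a) a \<in> Sig p"
      by (rule Sig_sdelta)
    have h_split: "h = sadd p h' (sdelta (h a) a)"
    proof
      fix w
      show "h w = sadd p h' (sdelta (h a) a) w"
        using insert.prems(1) by (cases "w = a") (auto simp: Sig_def sadd_def h'_def sdelta_def)
    qed
    have "{z. h' z \<noteq> 0} \<subseteq> F"
      using insert.prems(2) by (auto simp: h'_def)
    then have "phi_res \<phi> h' = scaled_pushforward p m (phi_bar \<phi>) h'"
      by (rule insert.IH[OF h'_Sig])
    then have "phi_res \<phi> (sadd p h' (sdelta (h a) a))
        = scaled_pushforward p m (phi_bar \<phi>) (sadd p h' (sdelta (h a) a))"
      using h_a h'_Sig delta_Sig
      by (simp add: phi_res_sadd scaled_pushforward_sadd scaled_pushforward_sdelta inj_phi_bar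
          phi_res_sdelta)
    with h_split show ?case
      by metis
  qed
  show ?thesis
    using assms by (intro on_support[of "{z. h z \<noteq> 0}"]) (auto simp: Sig_def)
qed

end

end

theorem lemma3p2:
  fixes p m :: int
    and \<phi> :: "('k::finite) sig \<times> 'k zk \<Rightarrow> 'k sig \<times> 'k zk"
    and x :: "'k zk"
  assumes "prime p"
    and "\<phi> \<in> iso (WR p) (WR p)"
    and "m \<in> {1..<p}"
    and "phi_res \<phi> (sdelta 1 zzero) = sdelta m zzero"
    and "infinite (zorbit (phi_bar \<phi>) x)"
  shows "(\<lambda>h. ssub p h (phi_res \<phi> h)) ` Bsub p (zorbit (phi_bar \<phi>) x)
           \<noteq> Bsub p (zorbit (phi_bar \<phi>) x)"
proof -
  let ?B = "Bsub p (zorbit (phi_bar \<phi>) x)"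
  have p_gt_1: "1 < p"
    using assms(1) prime_gt_1_int by blast
  have "sdelta 1 x \<in> ?B"
    using p_gt_1 self_in_zorbit[of x] Sig_sdelta[of 1 p x] by (auto simp: Bsub_def sdelta_def)
  moreover have "ssub p h (phi_res \<phi> h) \<noteq> sdelta 1 x" if "h \<in> ?B" for h
  proof -
    have "phi_res \<phi> h = scaled_pushforward p m (phi_bar \<phi>) h"
      using that phi_res_eq_scaled_pushforward[OF p_gt_1 assms(2-4)] by (simp add: Bsub_def)
    then show ?thesis
      using ssub_scaled_pushforward_ne_sdelta[OF assms(1,3) inj_phi_bar[OF p_gt_1 assms(2)] assms(5) that]
      by simp
  qed
  ultimately show ?thesis
    by (metis (no_types, lifting) imageE)
qed

end
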